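(* In the Jolteon protocol described in the context, if an honest replica successfully performs the Commit step on block $B$, then $B$ is globally direct-committed.
   Context: Jolteon protocol. There are $n=3f+1$ replicas, at most $f$ Byzantine, the rest honest; reliable authenticated channels; ideal threshold signatures in which $2f+1$ shares on the same message from distinct replicas combine into a threshold signature. A block is $B=(id,qc,tc,r,v,txn)$, with $qc$ a quorum certificate of its parent, $tc$ a timeout certificate or $\bot$, round $r$, view $v=0$, transactions $txn$, and $id$ a collision-resistant hash of the contents. A quorum certificate (QC) for $B$ is a threshold signature on $(B.id,B.r,B.v)$ from $2f+1$ shares (votes); $qc.r=B.r$; $B$ is certified if a QC for it exists; a genesis block of round $0$ has a QC. QCs are compared by round. A timeout message for round $r$ is a share on $r$ with the sender's $qc_{high}$; a timeout certificate (TC) for round $r$ is a threshold signature on $r$ from $2f+1$ timeout messages together with their $2f+1$ $qc_{high}$'s (all of round $<r$). Each round $r$ has a leader $L_r$ (round robin). Each replica keeps $r_{vote}=0$, $r_{cur}=1$, $qc_{high}$ = genesis QC. Propose: upon entering round $r$, $L_r$ multicasts $B=(id,qc_{high},tc,r,0,txn)$, with $tc$ the round-$(r-1)$ TC if $L_r$ entered round $r$ by receiving it, else $\bot$. Vote: upon the first valid proposal $B=(id,qc,tc,r,v,txn)$ from $L_r$, execute Advance Round, Lock, Commit; then if $r=r_{cur}$, $v=v_{cur}=0$, $r>r_{vote}$, and either $r=qc.r+1$ or ($r=tc.r+1$ and $qc.r\ge\max\{q.r: q$ a $qc_{high}$ in $tc\}$), send a share on $(id,r,v)$ to $L_{r+1}$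 and set $r_{vote}\gets r$. Lock: upon seeing a valid QC $qc$ (formed from votes or contained in a proposal, timeout message or TC), set $qc_{high}\gets\max(qc_{high},qc)$. Commit: whenever there are two certified blocks $B,B'$ with $B'.qc$ certifying $B$ and $B'.r=B.r+1$, commit $B$ and all its ancestors. Advance Round: set $r_{cur}\gets\max(r_{cur},r)$ upon receiving or forming a round-$(r-1)$ QC or TC. Timer: upon entering round $r$, send the round-$(r-1)$ TC to $L_r$ if held and reset a timer; on expiry stop voting in round $r_{cur}$ and multicast a timeout message; upon a valid timeout message or TC execute Advance Round, Lock, Commit; upon $2f+1$ timeout messages form a TC. Definition: a block $B$ is globally direct-committed if $f+1$ honest replicas each successfully perform the Vote step on a proposal of a block $B'$ in round $B.r+1$ such that $B'.qc$ certifies $B$ (these Vote calls invoke Lock, setting $qc_{high}\gets B'.qc$, and produce $f+1$ matching votes). *)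

theory Defs
  imports Main
begin

text \<open>Replicas are the naturals 0..n-1 with n = 3f+1.  Hashes (block ids) are naturals;
  the collision-resistant hash is a parameter H assumed injective.
  A quorum certificate is represented by the signed triple (id, r, v); it is valid iff it
  is the genesis QC or 2f+1 distinct replicas have produced a vote share on that triple
  (ideal threshold signatures).  A timeout certificate is represented by its round and
  the list of (signer, qc_high) pairs it was formed from.\<close>

datatype qc = QC (qc_id: nat) (qc_r: nat) (qc_v: nat)

datatype tc = TC (tc_r: nat) (tc_sigs: "(nat \<times> qc) list")

text \<open>A block (id, qc, tc, r, v, txn); its id is not stored but computed as H of the block.\<close>
datatype blk = Blk (b_qc: qc) (b_tc: "tc option") (b_r: nat) (b_v: nat) (b_txn: nat)

datatype msg =
    Propose nat blk                 \<comment> \<open>sender, block (multicast)\<close>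
  | Vote nat nat nat nat nat        \<comment> \<open>sender, recipient, share on (id, r, v)\<close>
  | Timeout nat nat qc              \<comment> \<open>sender, round, sender's qc_high (multicast)\<close>
  | TCMsg nat nat tc                \<comment> \<open>sender, recipient, TC\<close>

fun msg_sender :: "msg \<Rightarrow> nat" where
  "msg_sender (Propose j _) = j"
| "msg_sender (Vote j _ _ _ _) = j"
| "msg_sender (Timeout j _ _) = j"
| "msg_sender (TCMsg j _ _) = j"

datatype ev =
    VoteEv nat blk     \<comment> \<open>replica successfully performed the Vote step on a proposal of the block\<close>
  | CommitEv nat blk   \<comment> \<open>replica successfully performed the Commit step on the block\<close>

definition nrep :: "nat \<Rightarrow> nat" where "nrep f = 3 * f + 1"

definition leader :: "nat \<Rightarrow> nat \<Rightarrow> nat" where "leader f r = r mod nrep f"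

definition honest :: "nat \<Rightarrow> nat set \<Rightarrow> nat \<Rightarrow> bool" where
  "honest f F i \<longleftrightarrow> i < nrep f \<and> i \<notin> F"

definition genesis_blk :: blk where "genesis_blk = Blk (QC 0 0 0) None 0 0 0"

definition gqc :: "(blk \<Rightarrow> nat) \<Rightarrow> qc" where "gqc H = QC (H genesis_blk) 0 0"

definition valid_qc :: "nat \<Rightarrow> (blk \<Rightarrow> nat) \<Rightarrow> msg set \<Rightarrow> qc \<Rightarrow> bool" where
  "valid_qc f H N q \<longleftrightarrow> q = gqc H \<or>
     card {j. j < nrep f \<and> (\<exists>k. Vote j k (qc_id q) (qc_r q) (qc_v q) \<in> N)} \<ge> 2 * f + 1"

definition valid_tc :: "nat \<Rightarrow> (blk \<Rightarrow> nat) \<Rightarrow> msg set \<Rightarrow> tc \<Rightarrow> bool" where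
  "valid_tc f H N t \<longleftrightarrow> distinct (map fst (tc_sigs t)) \<and> length (tc_sigs t) = 2 * f + 1 \<and>
     (\<forall>(j, q) \<in> set (tc_sigs t). j < nrep f \<and> Timeout j (tc_r t) q \<in> N \<and>
        valid_qc f H N q \<and> qc_r q < tc_r t)"

definition valid_block :: "nat \<Rightarrow> (blk \<Rightarrow> nat) \<Rightarrow> msg set \<Rightarrow> blk \<Rightarrow> bool" where
  "valid_block f H N B \<longleftrightarrow> valid_qc f H N (b_qc B) \<and>
     (case b_tc B of None \<Rightarrow> True | Some t \<Rightarrow> valid_tc f H N t)"

record lstate =
  r_vote :: nat
  r_cur :: nat
  qc_high :: qc
  handled :: "nat set"       \<comment> \<open>rounds for which a valid proposal was already processed\<close>
  timed_out :: "nat set"     \<comment> \<open>rounds in which the timer expired (voting stopped)\<close>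
  proposed :: "nat set"
  held_tc :: "nat \<Rightarrow> tc option"
  entry_tc :: "nat \<Rightarrow> tc option"  \<comment> \<open>the round-(r-1) TC by which round r was entered\<close>

record gstate =
  loc :: "nat \<Rightarrow> lstate"
  net :: "msg set"        \<comment> \<open>all messages sent so far\<close>
  evlog :: "ev set"

definition init_lstate :: "(blk \<Rightarrow> nat) \<Rightarrow> lstate" where
  "init_lstate H = \<lparr>r_vote = 0, r_cur = 1, qc_high = gqc H, handled = {}, timed_out = {},
     proposed = {}, held_tc = (\<lambda>_. None), entry_tc = (\<lambda>_. None)\<rparr>"

definition init_state :: "(blk \<Rightarrow> nat) \<Rightarrow> gstate" where
  "init_state H = \<lparr>loc = (\<lambda>_. init_lstate H), net = {}, evlog = {}\<rparr>"

text \<open>Lock and Advance Round upon seeing a QC.\<close>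
definition lock :: "lstate \<Rightarrow> qc \<Rightarrow> lstate" where
  "lock ls q = ls\<lparr>qc_high := (if qc_r (qc_high ls) < qc_r q then q else qc_high ls)\<rparr>"

definition see_qc :: "lstate \<Rightarrow> qc \<Rightarrow> lstate" where
  "see_qc ls q = (let l = lock ls q in l\<lparr>r_cur := max (r_cur l) (Suc (qc_r q))\<rparr>)"

text \<open>Lock / Advance Round upon seeing a TC (including the QCs it contains).\<close>
definition see_tc :: "lstate \<Rightarrow> tc \<Rightarrow> lstate" where
  "see_tc ls t = (let l1 = fold (\<lambda>(j, q) l. see_qc l q) (tc_sigs t) ls;
                      l2 = l1\<lparr>held_tc := (held_tc l1)(tc_r t := Some t)\<rparr>
                  in if r_cur l2 < Suc (tc_r t)
                     then l2\<lparr>r_cur := Suc (tc_r t), entry_tc := (entry_tc l2)(Suc (tc_r t) := Some t)\<rparr>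
                     else l2)"

text \<open>Voting rule, evaluated after Advance Round and Lock.\<close>
definition vote_ok :: "lstate \<Rightarrow> blk \<Rightarrow> bool" where
  "vote_ok ls B \<longleftrightarrow> b_r B = r_cur ls \<and> b_v B = 0 \<and> b_r B > r_vote ls \<and> b_r B \<notin> timed_out ls \<and>
     (b_r B = Suc (qc_r (b_qc B)) \<or>
      (\<exists>t. b_tc B = Some t \<and> b_r B = Suc (tc_r t) \<and>
           (\<forall>(j, q) \<in> set (tc_sigs t). qc_r q \<le> qc_r (b_qc B))))"

definition after_proposal :: "lstate \<Rightarrow> blk \<Rightarrow> lstate" where
  "after_proposal ls B = (let l1 = see_qc ls (b_qc B);
                              l2 = (case b_tc B of None \<Rightarrow> l1 | Some t \<Rightarrow> see_tc l1 t)
                          in l2)"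

inductive step :: "nat \<Rightarrow> (blk \<Rightarrow> nat) \<Rightarrow> nat set \<Rightarrow> gstate \<Rightarrow> gstate \<Rightarrow> bool"
  for f :: nat and H :: "blk \<Rightarrow> nat" and F :: "nat set" where
  propose: "\<lbrakk> honest f F i; ls = loc s i; i = leader f (r_cur ls); r_cur ls \<notin> proposed ls \<rbrakk> \<Longrightarrow>
    step f H F s (s\<lparr>loc := (loc s)(i := ls\<lparr>proposed := insert (r_cur ls) (proposed ls)\<rparr>),
                   net := insert (Propose i (Blk (qc_high ls) (entry_tc ls (r_cur ls)) (r_cur ls) 0 txn)) (net s)\<rparr>)"
| recv_proposal: "\<lbrakk> honest f F i; ls = loc s i; Propose j B \<in> net s; j = leader f (b_r B);
      valid_block f H (net s) B; b_r B \<notin> handled ls;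
      l2 = after_proposal ls B; l3 = l2\<lparr>handled := insert (b_r B) (handled l2)\<rparr> \<rbrakk> \<Longrightarrow>
    step f H F s (if vote_ok l2 B
       then s\<lparr>loc := (loc s)(i := l3\<lparr>r_vote := b_r B\<rparr>),
              net := insert (Vote i (leader f (Suc (b_r B))) (H B) (b_r B) (b_v B)) (net s),
              evlog := insert (VoteEv i B) (evlog s)\<rparr>
       else s\<lparr>loc := (loc s)(i := l3)\<rparr>)"
| commit: "\<lbrakk> honest f F i; valid_qc f H (net s) (QC (H B') (b_r B') (b_v B'));
      valid_qc f H (net s) (b_qc B'); b_qc B' = QC (H B) (b_r B) (b_v B); b_r B' = Suc (b_r B) \<rbrakk> \<Longrightarrow>
    step f H F s (s\<lparr>evlog := insert (CommitEv i B) (evlog s)\<rparr>)"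
  \<comment> \<open>Timer expiry: stop voting in the current round and multicast a timeout message\<close>
| expire: "\<lbrakk> honest f F i; ls = loc s i; r_cur ls \<notin> timed_out ls \<rbrakk> \<Longrightarrow>
    step f H F s (s\<lparr>loc := (loc s)(i := ls\<lparr>timed_out := insert (r_cur ls) (timed_out ls)\<rparr>),
                   net := insert (Timeout i (r_cur ls) (qc_high ls)) (net s)\<rparr>)"
| recv_timeout: "\<lbrakk> honest f F i; Timeout j r q \<in> net s; valid_qc f H (net s) q; qc_r q < r \<rbrakk> \<Longrightarrow>
    step f H F s (s\<lparr>loc := (loc s)(i := see_qc (loc s i) q)\<rparr>)"
| form_tc: "\<lbrakk> honest f F i; valid_tc f H (net s) t \<rbrakk> \<Longrightarrow>
    step f H F s (s\<lparr>loc := (loc s)(i := see_tc (loc s i) t)\<rparr>)"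
| recv_tc: "\<lbrakk> honest f F i; TCMsg j i t \<in> net s; valid_tc f H (net s) t \<rbrakk> \<Longrightarrow>
    step f H F s (s\<lparr>loc := (loc s)(i := see_tc (loc s i) t)\<rparr>)"
| send_tc: "\<lbrakk> honest f F i; ls = loc s i; held_tc ls (r_cur ls - 1) = Some t \<rbrakk> \<Longrightarrow>
    step f H F s (s\<lparr>net := insert (TCMsg i (leader f (r_cur ls)) t) (net s)\<rparr>)"
| form_qc: "\<lbrakk> honest f F i; card {j. j < nrep f \<and> Vote j i d r v \<in> net s} \<ge> 2 * f + 1 \<rbrakk> \<Longrightarrow>
    step f H F s (s\<lparr>loc := (loc s)(i := see_qc (loc s i) (QC d r v))\<rparr>)"
  \<comment> \<open>Byzantine replicas send arbitrary messages under their own identity\<close>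
| byz: "\<lbrakk> j \<in> F; msg_sender m = j \<rbrakk> \<Longrightarrow>
    step f H F s (s\<lparr>net := insert m (net s)\<rparr>)"

definition reachable :: "nat \<Rightarrow> (blk \<Rightarrow> nat) \<Rightarrow> nat set \<Rightarrow> gstate \<Rightarrow> bool" where
  "reachable f H F s \<longleftrightarrow> (step f H F)\<^sup>*\<^sup>* (init_state H) s"

definition globally_direct_committed :: "nat \<Rightarrow> (blk \<Rightarrow> nat) \<Rightarrow> nat set \<Rightarrow> gstate \<Rightarrow> blk \<Rightarrow> bool" where
  "globally_direct_committed f H F s B \<longleftrightarrow>
     (\<exists>B'. b_r B' = Suc (b_r B) \<and> b_qc B' = QC (H B) (b_r B) (b_v B) \<and>
        card {j. honest f F j \<and> VoteEv j B' \<in> evlog s} \<ge> f + 1)"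

end

theory Submission
  imports Defs
begin

text \<open>Two invariants of reachable states carry the argument: every vote share of an honest
  replica on an id d in the network was produced by a logged Vote step on a block hashing to d,
  and every logged Commit of B is witnessed by a certified block B' of round B.r+1 whose qc
  certifies B.  A committing replica therefore sees a QC for B', i.e. 2f+1 vote shares on it;
  at least f+1 of them come from honest replicas, and by injectivity of H each of these
  replicas voted on B' itself.\<close>

lemma valid_qc_mono:
  assumes "N \<subseteq> N'" and "valid_qc f H N q"
  shows "valid_qc f H N' q"
proof -
  have "card {j. j < nrep f \<and> (\<exists>k. Vote j k (qc_id q) (qc_r q) (qc_v q) \<in> N)}
      \<le> card {j. j < nrep f \<and> (\<exists>k. Vote j k (qc_id q) (qc_r q) (qc_v q) \<in> N')}"
    by (rule card_mono) (use assms(1) in auto)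
  with assms(2) show ?thesis
    unfolding valid_qc_def by linarith
qed

lemma valid_qc_quorum:
  assumes "valid_qc f H N q" and "qc_r q \<noteq> 0"
  shows "2 * f + 1 \<le>
    card {j. j < nrep f \<and> (\<exists>k. Vote j k (qc_id q) (qc_r q) (qc_v q) \<in> N)}"
  using assms by (auto simp: valid_qc_def gqc_def)

(* The propose rule has the hypothesis i = leader f (r_cur (loc s i)), on which the
   simplifier loops; hence the premises of that case are kept out of the simp set. *)

lemma step_net_mono: "step f H F s s' \<Longrightarrow> net s \<subseteq> net s'"
  by (induction rule: step.induct) (simp_all (no_asm) add: subset_insertI)

lemma step_evlog_mono: "step f H F s s' \<Longrightarrow> evlog s \<subseteq> evlog s'"
  by (induction rule: step.induct) (simp_all (no_asm) add: subset_insertI)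

lemma step_new_honest_vote:
  assumes "step f H F s s'" and "honest f F j"
    and "Vote j k d r v \<in> net s'" and "Vote j k d r v \<notin> net s"
  shows "\<exists>B. H B = d \<and> VoteEv j B \<in> evlog s'"
  using assms
proof (induction rule: step.induct)
  case propose
  from propose.prems show ?case by simp
qed (auto simp: honest_def split: if_splits)

lemma step_new_commit:
  assumes "step f H F s s'" and "CommitEv i B \<in> evlog s'" and "CommitEv i B \<notin> evlog s"
  shows "\<exists>B'. b_r B' = Suc (b_r B) \<and> b_qc B' = QC (H B) (b_r B) (b_v B) \<and>
           valid_qc f H (net s) (QC (H B') (b_r B') (b_v B'))"
  using assms
proof (induction rule: step.induct)
  case propose
  from propose.prems show ?case by simp
qed (auto split: if_splits)

lemma reachable_honest_vote_logged:
  assumes "reachable f H F s" and "honest f F j" and "Vote j k d r v \<in> net s"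
  shows "\<exists>B. H B = d \<and> VoteEv j B \<in> evlog s"
  using assms(1,3) unfolding reachable_def
proof (induction rule: rtranclp_induct)
  case base
  then show ?case by (simp add: init_state_def)
next
  case (step s s')
  show ?case
  proof (cases "Vote j k d r v \<in> net s")
    case True
    with step.IH step_evlog_mono[OF step.hyps(2)] show ?thesis by blast
  next
    case False
    with step_new_honest_vote[OF step.hyps(2) assms(2) step.prems] show ?thesis .
  qed
qed

lemma reachable_commit_certified:
  assumes "reachable f H F s" and "CommitEv i B \<in> evlog s"
  shows "\<exists>B'. b_r B' = Suc (b_r B) \<and> b_qc B' = QC (H B) (b_r B) (b_v B) \<and>
           valid_qc f H (net s) (QC (H B') (b_r B') (b_v B'))"
  using assms unfolding reachable_def
proof (induction rule: rtranclp_induct)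
  case base
  then show ?case by (simp add: init_state_def)
next
  case (step s s')
  have still_valid: "valid_qc f H (net s') q" if "valid_qc f H (net s) q" for q
    using valid_qc_mono[OF step_net_mono[OF step.hyps(2)] that] .
  show ?case
  proof (cases "CommitEv i B \<in> evlog s")
    case True
    with step.IH still_valid show ?thesis by blast
  next
    case False
    with step_new_commit[OF step.hyps(2) step.prems] still_valid show ?thesis by blast
  qed
qed

lemma reachable_honest_vote_on_hash:
  assumes "inj H" and "reachable f H F s" and "honest f F j"
    and "Vote j k (H B) r v \<in> net s"
  shows "VoteEv j B \<in> evlog s"
  using reachable_honest_vote_logged[OF assms(2-4)] assms(1) by (auto simp: inj_eq)

theorem lemma1:
  fixes f :: nat and H :: "blk \<Rightarrow> nat" and F :: "nat set" and s :: gstate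
    and i :: nat and B :: blk
  assumes "inj H"
    and "F \<subseteq> {..<nrep f}" and "card F \<le> f"
    and "reachable f H F s"
    and "honest f F i"
    and "CommitEv i B \<in> evlog s"
  shows "globally_direct_committed f H F s B"
proof -
  obtain B' where B': "b_r B' = Suc (b_r B)" "b_qc B' = QC (H B) (b_r B) (b_v B)"
    and certified: "valid_qc f H (net s) (QC (H B') (b_r B') (b_v B'))"
    using reachable_commit_certified[OF assms(4,6)] by blast
  define S where "S = {j. j < nrep f \<and> (\<exists>k. Vote j k (H B') (b_r B') (b_v B') \<in> net s)}"
  define V where "V = {j. honest f F j \<and> VoteEv j B' \<in> evlog s}"
  have honest_voters: "S - F \<subseteq> V"
    using reachable_honest_vote_on_hash[OF assms(1,4)] by (auto simp: S_def V_def honest_def)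
  have "2 * f + 1 \<le> card S"
    using valid_qc_quorum[OF certified] B'(1) by (simp add: S_def)
  then have "f + 1 \<le> card (S - F)"
    using diff_card_le_card_Diff[OF finite_subset[OF assms(2) finite_lessThan], of S] assms(3)
    by linarith
  also have "\<dots> \<le> card V"
    using honest_voters
    by (rule card_mono[rotated]) (auto intro: finite_subset[of _ "{..<nrep f}"] simp: V_def honest_def)
  finally show ?thesis
    using B' unfolding globally_direct_committed_def V_def by blast
qed

end
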